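(* For every positive integer $n$, let $c_n$ be the smallest positive integer such that $c_n P' \in E_n$ for every $P \in E_n$. Then $$c_n = \mathrm{lcm}(1,2,\dots,n).$$
   Context: For $n \in \mathbb{N}$, $E_n$ denotes the set of polynomials $P \in \mathbb{C}[X]$ of degree $\leq n$ (including the zero polynomial) such that $P(\mathbb{Z}) \subset \mathbb{Z}$ (integer-valued polynomials of degree at most $n$). $P'$ denotes the derivative of $P$. *)

theory Defs
  imports Complex_Main "HOL-Computational_Algebra.Polynomial"
begin

definition E :: "nat \<Rightarrow> complex poly set" where
  "E n = {P. degree P \<le> n \<and> (\<forall>k::int. poly P (of_int k) \<in> \<int>)}"

end

theory Submission
  imports Defs
begin

text \<open>
  For \<open>degree P \<le> n\<close> one has
  \<open>P'(0) = (\<Sum>j=1..n. (-1)^(j-1) (n choose j) / j \<cdot> (P(j) - P(0)))\<close>: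
  both sides are linear in \<open>P\<close>, and on a monomial \<open>x^(r+1)\<close> the identity reduces to
  \<open>\<Sum>j. (-1)^j (n choose j) j^r = 0\<close> for \<open>r < n\<close>, which is the value at \<open>1\<close> of
  \<open>(x d/dx)^r (1 - x)^n\<close>, a polynomial still divisible by \<open>(1 - x)^(n-r)\<close>.
  Applied to the translates \<open>P(x + m)\<close>, this shows that \<open>lcm(1..n) \<cdot> P'\<close> is integer-valued
  whenever \<open>P\<close> is. Conversely, for \<open>k \<le> n\<close> the binomial polynomial \<open>x choose k\<close> is
  integer-valued and its derivative at \<open>0\<close> is \<open>(-1)^(k-1) / k\<close>, so every admissible
  factor is divisible by each \<open>k \<le> n\<close>.
\<close>

definition euler_op :: "'a::{comm_semiring_1,semiring_no_zero_divisors} poly \<Rightarrow> 'a poly" where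
  "euler_op p = pCons 0 (pderiv p)"

lemma coeff_euler_op_funpow: "coeff ((euler_op ^^ r) p) i = of_nat i ^ r * coeff p i"
proof (induction r arbitrary: i)
  case (Suc r)
  then show ?case
    by (cases i) (simp_all add: euler_op_def coeff_pderiv mult.assoc)
qed simp

lemma power_dvd_euler_op:
  fixes a p :: "'a::{comm_semiring_1,semiring_no_zero_divisors} poly"
  assumes "a ^ Suc m dvd p"
  shows "a ^ m dvd euler_op p"
proof -
  obtain g where p: "p = a ^ Suc m * g" using assms by (elim dvdE)
  have "pderiv p = a ^ m * (smult (of_nat (Suc m)) (pderiv a) * g + a * pderiv g)"
    unfolding p pderiv_mult pderiv_power_Suc by (simp add: algebra_simps)
  then have "euler_op p = pCons 0 (a ^ m * (smult (of_nat (Suc m)) (pderiv a) * g + a * pderiv g))"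
    by (simp add: euler_op_def)
  also have "\<dots> = a ^ m * pCons 0 (smult (of_nat (Suc m)) (pderiv a) * g + a * pderiv g)"
    by simp
  finally show ?thesis by (metis dvd_triv_left)
qed

lemma power_dvd_euler_op_funpow:
  fixes a p :: "'a::{comm_semiring_1,semiring_no_zero_divisors} poly"
  assumes "a ^ m dvd p" "r \<le> m"
  shows "a ^ (m - r) dvd (euler_op ^^ r) p"
  using assms(2)
proof (induction r)
  case (Suc r)
  then have "a ^ Suc (m - Suc r) dvd (euler_op ^^ r) p"
    by (simp add: Suc_diff_Suc)
  then show ?case by (simp add: power_dvd_euler_op)
qed (use assms(1) in simp)

lemma poly_eq_sum_coeffs:
  fixes p :: "'a::comm_semiring_1 poly"
  assumes "degree p \<le> n"
  shows "poly p x = (\<Sum>i\<le>n. coeff p i * x ^ i)"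
proof -
  have "poly p x = poly (\<Sum>i\<le>n. monom (coeff p i) i) x"
    using poly_as_sum_of_monoms'[OF assms] by simp
  then show ?thesis by (simp add: poly_sum poly_monom)
qed

lemma alternating_sum_choose_power:
  assumes "r < n"
  shows "(\<Sum>i\<le>n. (-1) ^ i * of_nat (n choose i) * of_nat i ^ r) = (0::'a::idom)"
proof -
  let ?q = "[:1, -1:] ^ n :: 'a poly"
  have "degree ?q \<le> n"
    using degree_power_le[of "[:1, -1:]" n] by simp
  then have "degree ((euler_op ^^ r) ?q) \<le> n"
    by (intro degree_le) (simp add: coeff_euler_op_funpow coeff_eq_0)
  then have "poly ((euler_op ^^ r) ?q) 1 = (\<Sum>i\<le>n. (-1) ^ i * of_nat (n choose i) * of_nat i ^ r)"
    by (simp add: poly_eq_sum_coeffs coeff_euler_op_funpow coeff_linear_poly_power mult_ac)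
  moreover obtain g where "(euler_op ^^ r) ?q = [:1, -1:] ^ (n - r) * g"
    using power_dvd_euler_op_funpow[of "[:1, -1:]" n ?q r] assms by (auto elim: dvdE)
  then have "poly ((euler_op ^^ r) ?q) 1 = 0"
    using assms by simp
  ultimately show ?thesis by simp
qed

definition pderiv_weight :: "nat \<Rightarrow> nat \<Rightarrow> 'a::field_char_0" where
  "pderiv_weight n j = (-1) ^ (j - 1) * of_nat (n choose j) / of_nat j"

lemma sum_pderiv_weight_monomial:
  assumes "i \<le> n"
  shows "(\<Sum>j=1..n. pderiv_weight n j * (of_nat j ^ i - 0 ^ i))
           = (if i = 1 then 1 else (0::'a::field_char_0))"
proof (cases i)
  case (Suc r)
  have "(\<Sum>j=1..n. pderiv_weight n j * (of_nat j ^ i - 0 ^ i))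
      = - (\<Sum>j=1..n. (-1) ^ j * of_nat (n choose j) * of_nat j ^ r :: 'a)"
    unfolding sum_negf[symmetric]
  proof (rule sum.cong)
    fix j assume "j \<in> {1..n}"
    then obtain k where "j = Suc k" by (cases j) auto
    then show "pderiv_weight n j * (of_nat j ^ i - 0 ^ i)
        = - ((-1) ^ j * of_nat (n choose j) * of_nat j ^ r :: 'a)"
      using Suc by (simp add: pderiv_weight_def field_simps del: of_nat_Suc)
  qed simp
  also have "(\<Sum>j=1..n. (-1) ^ j * of_nat (n choose j) * of_nat j ^ r :: 'a)
      = (\<Sum>j\<le>n. (-1) ^ j * of_nat (n choose j) * of_nat j ^ r) - 0 ^ r"
    by (simp add: atMost_atLeast0 sum.atLeast_Suc_atMost)
  also have "\<dots> = - (0 ^ r)"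
    using alternating_sum_choose_power[of r n] Suc assms by simp
  finally show ?thesis using Suc by simp
qed simp

lemma poly_pderiv_0_eq_weighted_sum:
  fixes P :: "'a::field_char_0 poly"
  assumes "degree P \<le> n"
  shows "poly (pderiv P) 0 = (\<Sum>j=1..n. pderiv_weight n j * (poly P (of_nat j) - poly P 0))"
proof -
  have value_difference: "poly P x - poly P 0 = (\<Sum>i\<le>n. coeff P i * (x ^ i - 0 ^ i))" for x
    by (simp add: poly_eq_sum_coeffs[OF assms] sum_subtractf right_diff_distrib)
  have "(\<Sum>j=1..n. pderiv_weight n j * (poly P (of_nat j) - poly P 0))
      = (\<Sum>j=1..n. \<Sum>i\<le>n. coeff P i * (pderiv_weight n j * (of_nat j ^ i - 0 ^ i)))"
    by (simp add: value_difference sum_distrib_left mult_ac)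
  also have "\<dots> = (\<Sum>i\<le>n. coeff P i * (\<Sum>j=1..n. pderiv_weight n j * (of_nat j ^ i - 0 ^ i)))"
    by (subst sum.swap) (simp add: sum_distrib_left)
  also have "\<dots> = (\<Sum>i\<le>n. if i = 1 then coeff P i else 0)"
    using sum_pderiv_weight_monomial[of _ n, where 'a = 'a] by (intro sum.cong refl) simp
  also have "\<dots> = coeff P 1"
    using assms by (cases n) (simp_all add: coeff_eq_0)
  finally show ?thesis
    by (simp add: poly_0_coeff_0 coeff_pderiv)
qed

lemma of_nat_mult_pderiv_weight_in_Ints:
  assumes "j dvd c"
  shows "of_nat c * pderiv_weight n j \<in> \<int>"
proof (cases "j = 0")
  case False
  obtain t where "c = j * t"
    using assms by (elim dvdE)
  with False have "of_nat c * pderiv_weight n j = (-1) ^ (j - 1) * of_nat (n choose j) * of_nat t"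
    by (simp add: pderiv_weight_def)
  also have "\<dots> \<in> \<int>"
    by (intro Ints_mult Ints_power Ints_minus Ints_1 Ints_of_nat)
  finally show ?thesis .
qed (simp add: pderiv_weight_def)

definition binomial_poly :: "nat \<Rightarrow> 'a::field_char_0 poly" where
  "binomial_poly k = smult (1 / fact k) (\<Prod>i<k. [:- of_nat i, 1:])"

lemma poly_binomial_poly: "poly (binomial_poly k) x = x gchoose k"
proof -
  have "fact k * (x gchoose k) = (\<Prod>i<k. x - of_nat i)"
    by (simp add: gbinomial_mult_fact atLeast0LessThan)
  then show ?thesis
    by (simp add: binomial_poly_def poly_prod field_simps)
qed

lemma degree_binomial_poly_le: "degree (binomial_poly k) \<le> k"
proof -
  have "degree (\<Prod>i<k. [:- of_nat i, 1:] :: 'a poly) \<le> (\<Sum>i<k. 1)"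
    by (rule order_trans[OF degree_prod_sum_le]) simp_all
  then show ?thesis
    by (simp add: binomial_poly_def)
qed

lemma poly_pderiv_binomial_poly_0:
  "poly (pderiv (binomial_poly (Suc k))) 0 = ((-1) ^ k / of_nat (Suc k) :: 'a::field_char_0)"
proof -
  define R :: "'a poly" where "R = (\<Prod>i<k. [:- of_nat (Suc i), 1:])"
  have "(\<Prod>i<Suc k. [:- of_nat i, 1:] :: 'a poly) = [:0, 1:] * R"
    unfolding R_def by (subst prod.lessThan_Suc_shift) simp
  then have "poly (pderiv (binomial_poly (Suc k))) 0 = poly R 0 / fact (Suc k)"
    by (simp add: binomial_poly_def pderiv_smult pderiv_mult pderiv_pCons)
  also have "poly R 0 = (\<Prod>i<k. (-1) * of_nat (Suc i))"
    by (simp add: R_def poly_prod del: of_nat_Suc)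
  also have "\<dots> = (-1) ^ k * fact k"
    unfolding prod.distrib prod_constant card_lessThan
    by (simp add: fact_prod_Suc lessThan_atLeast0 del: of_nat_Suc)
  finally show ?thesis
    by (simp add: fact_Suc del: of_nat_Suc)
qed

lemma binomial_poly_in_E: "k \<le> n \<Longrightarrow> binomial_poly k \<in> E n"
  by (auto simp: E_def poly_binomial_poly of_int_gbinomial[symmetric]
      intro: order_trans[OF degree_binomial_poly_le])

lemma pcompose_shift_in_E: "P \<in> E n \<Longrightarrow> pcompose P [:of_int m, 1:] \<in> E n"
  by (auto simp: E_def degree_pcompose poly_pcompose simp flip: of_int_add)

lemma of_nat_mult_poly_pderiv_0_in_Ints:
  assumes "P \<in> E n" and "Lcm {1..n} dvd c"
  shows "of_nat c * poly (pderiv P) 0 \<in> \<int>"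
proof -
  have "degree P \<le> n" and P_Ints: "\<And>k::int. poly P (of_int k) \<in> \<int>"
    using assms(1) by (auto simp: E_def)
  then have "of_nat c * poly (pderiv P) 0
      = (\<Sum>j=1..n. of_nat c * pderiv_weight n j * (poly P (of_nat j) - poly P 0))"
    by (simp add: poly_pderiv_0_eq_weighted_sum sum_distrib_left mult.assoc)
  also have "\<dots> \<in> \<int>"
  proof (rule Ints_sum)
    fix j assume "j \<in> {1..n}"
    then have "j dvd c"
      by (intro dvd_trans[OF dvd_Lcm assms(2)]) auto
    moreover have "poly P (of_nat j) - poly P 0 \<in> \<int>"
      using P_Ints[of "int j"] P_Ints[of 0] by simp
    ultimately show "of_nat c * pderiv_weight n j * (poly P (of_nat j) - poly P 0) \<in> \<int>"
      by (intro Ints_mult of_nat_mult_pderiv_weight_in_Ints)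
  qed
  finally show ?thesis .
qed

lemma smult_pderiv_in_E:
  assumes "P \<in> E n" and "Lcm {1..n} dvd c"
  shows "smult (of_nat c) (pderiv P) \<in> E n"
proof -
  have "of_nat c * poly (pderiv P) (of_int m) \<in> \<int>" for m
  proof -
    have "poly (pderiv (pcompose P [:of_int m, 1:])) 0 = poly (pderiv P) (of_int m)"
      by (simp add: pderiv_pcompose poly_pcompose pderiv_pCons)
    with of_nat_mult_poly_pderiv_0_in_Ints[OF pcompose_shift_in_E[OF assms(1), of m] assms(2)]
    show ?thesis
      by (simp only:)
  qed
  moreover have "degree (smult (of_nat c) (pderiv P)) \<le> n"
    using assms(1) degree_pderiv[of P] by (auto simp: E_def)
  ultimately show ?thesis
    by (simp add: E_def)
qed

lemma dvd_if_smult_pderiv_closed_E: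
  assumes closed: "\<forall>P\<in>E n. smult (of_nat c) (pderiv P) \<in> E n" and k: "k \<in> {1..n}"
  shows "k dvd c"
proof -
  obtain k' where k': "k = Suc k'"
    using k by (cases k) auto
  have "smult (of_nat c) (pderiv (binomial_poly k :: complex poly)) \<in> E n"
    using closed binomial_poly_in_E k by auto
  then have "poly (smult (of_nat c) (pderiv (binomial_poly k :: complex poly))) (of_int 0) \<in> \<int>"
    unfolding E_def by blast
  then have "of_nat c * ((-1) ^ k' / of_nat k) \<in> (\<int> :: complex set)"
    by (simp add: k' poly_pderiv_binomial_poly_0 del: of_nat_Suc)
  then have "(-1) ^ k' * (of_nat c * ((-1) ^ k' / of_nat k)) \<in> (\<int> :: complex set)"
    by (metis Ints_1 Ints_minus Ints_mult Ints_power)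
  also have "(-1) ^ k' * (of_nat c * ((-1) ^ k' / of_nat k)) = (of_int (int c) / of_int (int k) :: complex)"
    by (simp flip: power_mult_distrib)
  finally have "(of_int (int c) / of_int (int k) :: complex) \<in> \<int>" .
  then have "int k = 0 \<or> int k dvd int c"
    by (simp only: of_int_div_of_int_in_Ints_iff)
  then show ?thesis
    using k by simp
qed

lemma smult_pderiv_closed_E_iff:
  "(\<forall>P\<in>E n. smult (of_nat c) (pderiv P) \<in> E n) \<longleftrightarrow> Lcm {1..n} dvd c"
  using smult_pderiv_in_E dvd_if_smult_pderiv_closed_E by (auto intro: Lcm_least)

theorem theorem1:
  fixes n :: nat
  assumes "n \<ge> 1"
  shows "(LEAST c::nat. c > 0 \<and> (\<forall>P\<in>E n. smult (of_nat c) (pderiv P) \<in> E n))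
           = Lcm {1..n}"
  unfolding smult_pderiv_closed_E_iff
proof (rule Least_equality)
  show "Lcm {1..n} > 0 \<and> Lcm {1..n} dvd Lcm {1..n}"
    by (simp add: Lcm_0_iff flip: neq0_conv)
qed (simp add: dvd_imp_le)

end
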